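(* Let $G$ be a finite simple connected graph and $H$ an induced subgraph of $G$ with $\mathrm{diam}(H)=2$. If $\beta(H)=n(H)-t$ for some positive integer $t$, then $\beta(G)\le n(G)-t$.
   Context: $n(X)$ denotes the number of vertices of a graph $X$. For an ordered set $W=\{w_1,\dots,w_k\}$ of vertices of a connected graph $X$, $r(v|W)=(d_X(v,w_1),\dots,d_X(v,w_k))$ with $d_X$ the shortest-path distance; $W$ is a resolving set if distinct vertices have distinct vectors $r(\cdot|W)$, and $\beta(X)$, the metric dimension, is the minimum size of a resolving set. *)

theory Defs
  imports Main "HOL-Library.Extended_Nat"
begin

definition simple_graph :: "'a set \<Rightarrow> ('a \<Rightarrow> 'a \<Rightarrow> bool) \<Rightarrow> bool" where
  "simple_graph V E \<longleftrightarrow> finite V \<and> V \<noteq> {} \<and>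
     (\<forall>u v. E u v \<longrightarrow> u \<in> V \<and> v \<in> V) \<and>
     (\<forall>u v. E u v \<longrightarrow> E v u) \<and> (\<forall>u. \<not> E u u)"

fun walk :: "'a set \<Rightarrow> ('a \<Rightarrow> 'a \<Rightarrow> bool) \<Rightarrow> nat \<Rightarrow> 'a \<Rightarrow> 'a \<Rightarrow> bool" where
  "walk V E 0 u v = (u = v \<and> u \<in> V)"
| "walk V E (Suc n) u v = (\<exists>w. u \<in> V \<and> w \<in> V \<and> E u w \<and> walk V E n w v)"

definition connected_graph :: "'a set \<Rightarrow> ('a \<Rightarrow> 'a \<Rightarrow> bool) \<Rightarrow> bool" where
  "connected_graph V E \<longleftrightarrow> V \<noteq> {} \<and> (\<forall>u\<in>V. \<forall>v\<in>V. \<exists>n. walk V E n u v)"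

definition gdist :: "'a set \<Rightarrow> ('a \<Rightarrow> 'a \<Rightarrow> bool) \<Rightarrow> 'a \<Rightarrow> 'a \<Rightarrow> nat" where
  "gdist V E u v = (LEAST n. walk V E n u v)"

definition gdiam :: "'a set \<Rightarrow> ('a \<Rightarrow> 'a \<Rightarrow> bool) \<Rightarrow> enat" where
  "gdiam V E = (if connected_graph V E
      then enat (Max {gdist V E u v | u v. u \<in> V \<and> v \<in> V}) else \<infinity>)"

definition induced_edges :: "('a \<Rightarrow> 'a \<Rightarrow> bool) \<Rightarrow> 'a set \<Rightarrow> 'a \<Rightarrow> 'a \<Rightarrow> bool" where
  "induced_edges E S = (\<lambda>u v. E u v \<and> u \<in> S \<and> v \<in> S)"

definition resolving_set :: "'a set \<Rightarrow> ('a \<Rightarrow> 'a \<Rightarrow> bool) \<Rightarrow> 'a set \<Rightarrow> bool" where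
  "resolving_set V E W \<longleftrightarrow> W \<subseteq> V \<and>
     (\<forall>u\<in>V. \<forall>v\<in>V. (\<forall>w\<in>W. gdist V E u w = gdist V E v w) \<longrightarrow> u = v)"

definition metric_dim :: "'a set \<Rightarrow> ('a \<Rightarrow> 'a \<Rightarrow> bool) \<Rightarrow> nat" where
  "metric_dim V E = Min (card ` {W. resolving_set V E W})"

end

theory Submission
  imports Defs
begin

text \<open>A resolving set of the induced subgraph H together with all vertices outside H resolves G:
a vertex outside H is separated from every other vertex by its own distance 0, and two vertices
of H are separated by the resolving set of H because, when H has diameter at most 2, distances
in H between its vertices coincide with distances in G (an induced subgraph has the same edges,
and a distance 2 in H cannot shrink below 2 in G). Hence \<open>\<beta>(G) \<le> \<beta>(H) + n(G) - n(H)\<close>.\<close>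

lemma walk_induced_imp_walk:
  assumes "S \<subseteq> V" "walk S (induced_edges E S) n u v"
  shows "walk V E n u v"
  using assms(2)
proof (induction n arbitrary: u)
  case 0 then show ?case using assms(1) by auto
next
  case (Suc n) then show ?case using assms(1) by (auto simp: induced_edges_def)
qed

lemma walk_le_1_imp_walk_induced:
  assumes "n \<le> 1" "u \<in> S" "v \<in> S" "walk V E n u v"
  shows "walk S (induced_edges E S) n u v"
proof -
  have "n = 0 \<or> n = 1" using assms(1) by auto
  then show ?thesis using assms by (auto simp: induced_edges_def)
qed

lemma walk_gdist:
  assumes "walk V E n u v"
  shows "walk V E (gdist V E u v) u v"
  using assms unfolding gdist_def by (rule LeastI)

lemma gdist_le_walk:
  assumes "walk V E n u v"
  shows "gdist V E u v \<le> n"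
  using assms unfolding gdist_def by (rule Least_le)

lemma gdist_self [simp]: "u \<in> V \<Longrightarrow> gdist V E u u = 0"
  unfolding gdist_def by (rule Least_eq_0) simp

lemma connected_graph_walk:
  assumes "connected_graph V E" "u \<in> V" "v \<in> V"
  obtains n where "walk V E n u v"
  using assms unfolding connected_graph_def by blast

lemma gdist_eq_0_iff:
  assumes "connected_graph V E" "u \<in> V" "v \<in> V"
  shows "gdist V E u v = 0 \<longleftrightarrow> u = v"
proof
  obtain n where "walk V E n u v" using assms by (rule connected_graph_walk)
  then have "walk V E (gdist V E u v) u v" by (rule walk_gdist)
  then show "gdist V E u v = 0 \<Longrightarrow> u = v" by simp
qed (use assms(2) in simp)

lemma gdist_induced_eq:
  assumes "S \<subseteq> V" "u \<in> S" "v \<in> S" "walk S (induced_edges E S) n u v"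
    and "gdist S (induced_edges E S) u v \<le> 2"
  shows "gdist V E u v = gdist S (induced_edges E S) u v"
proof -
  let ?H = "induced_edges E S"
  have "walk S ?H (gdist S ?H u v) u v" using assms(4) by (rule walk_gdist)
  then have "walk V E (gdist S ?H u v) u v" by (rule walk_induced_imp_walk[OF assms(1)])
  then have le: "gdist V E u v \<le> gdist S ?H u v" and walk_G: "walk V E (gdist V E u v) u v"
    by (rule gdist_le_walk, rule walk_gdist)
  show ?thesis
  proof (cases "gdist V E u v \<le> 1")
    case True
    then have "walk S ?H (gdist V E u v) u v"
      using assms(2,3) walk_G by (rule walk_le_1_imp_walk_induced)
    then have "gdist S ?H u v \<le> gdist V E u v" by (rule gdist_le_walk)
    then show ?thesis using le by simp
  qed (use le assms(5) in simp)
qed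

lemma gdiam_le_enatD:
  assumes "finite V" "gdiam V E \<le> enat d"
  shows "connected_graph V E" "\<And>u v. u \<in> V \<Longrightarrow> v \<in> V \<Longrightarrow> gdist V E u v \<le> d"
proof -
  show conn: "connected_graph V E" using assms(2) unfolding gdiam_def by (auto split: if_splits)
  let ?D = "{gdist V E u v | u v. u \<in> V \<and> v \<in> V}"
  have "?D = (\<lambda>(u, v). gdist V E u v) ` (V \<times> V)" by auto
  then have fin: "finite ?D" using assms(1) by simp
  have "Max ?D \<le> d" using assms(2) conn unfolding gdiam_def by simp
  moreover have "gdist V E u v \<le> Max ?D" if "u \<in> V" "v \<in> V" for u v
    using fin that by (intro Max_ge) auto
  ultimately show "gdist V E u v \<le> d" if "u \<in> V" "v \<in> V" for u v
    using that by (meson order_trans)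
qed

lemma resolving_set_self:
  assumes "connected_graph V E"
  shows "resolving_set V E V"
  unfolding resolving_set_def
proof (intro conjI ballI impI subset_refl)
  fix u v assume "u \<in> V" "v \<in> V" and "\<forall>w\<in>V. gdist V E u w = gdist V E v w"
  then have "gdist V E u v = 0" by simp
  then show "u = v" using gdist_eq_0_iff[OF assms \<open>u \<in> V\<close> \<open>v \<in> V\<close>] by simp
qed

lemma resolving_set_subset: "resolving_set V E W \<Longrightarrow> W \<subseteq> V"
  unfolding resolving_set_def by simp

lemma finite_resolving_sets:
  assumes "finite V"
  shows "finite {W. resolving_set V E W}"
proof (rule finite_subset)
  show "{W. resolving_set V E W} \<subseteq> Pow V" using resolving_set_subset by blast
qed (use assms in simp)

lemma metric_dim_le_card:
  assumes "finite V" "resolving_set V E W"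
  shows "metric_dim V E \<le> card W"
  unfolding metric_dim_def using finite_resolving_sets[OF assms(1)] assms(2) by (intro Min_le) auto

lemma metric_basis_exists:
  assumes "finite V" "connected_graph V E"
  obtains W where "resolving_set V E W" "card W = metric_dim V E"
proof -
  have "metric_dim V E \<in> card ` {W. resolving_set V E W}"
    unfolding metric_dim_def
    using finite_resolving_sets[OF assms(1)] resolving_set_self[OF assms(2)] by (intro Min_in) auto
  then show ?thesis using that by auto
qed

lemma resolving_set_Un_outside_induced:
  assumes "S \<subseteq> V" "connected_graph V E" "connected_graph S (induced_edges E S)"
    and diam_le_2: "\<And>u v. u \<in> S \<Longrightarrow> v \<in> S \<Longrightarrow> gdist S (induced_edges E S) u v \<le> 2"
    and res: "resolving_set S (induced_edges E S) W"
  shows "resolving_set V E (W \<union> (V - S))"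
  unfolding resolving_set_def
proof (intro conjI ballI impI)
  let ?H = "induced_edges E S"
  have "W \<subseteq> S" using res by (rule resolving_set_subset)
  then show "W \<union> (V - S) \<subseteq> V" using assms(1) by auto
  fix u v assume uv: "u \<in> V" "v \<in> V"
    and same: "\<forall>w\<in>W \<union> (V - S). gdist V E u w = gdist V E v w"
  show "u = v"
  proof (cases "u \<in> S \<and> v \<in> S")
    case True
    have "gdist V E x w = gdist S ?H x w" if x: "x \<in> S" and w: "w \<in> W" for x w
    proof -
      have "w \<in> S" using \<open>W \<subseteq> S\<close> w by blast
      obtain n where "walk S ?H n x w" using assms(3) x \<open>w \<in> S\<close> by (rule connected_graph_walk)
      then show ?thesis
        using diam_le_2[OF x \<open>w \<in> S\<close>] by (rule gdist_induced_eq[OF assms(1) x \<open>w \<in> S\<close>])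
    qed
    then have "\<forall>w\<in>W. gdist S ?H u w = gdist S ?H v w" using same True by (metis UnI1)
    with res True show ?thesis unfolding resolving_set_def by simp
  next
    case False
    then consider "u \<in> V - S" | "v \<in> V - S" using uv by blast
    then show ?thesis
    proof cases
      case 1
      then have "gdist V E v u = 0" using same uv by force
      then show ?thesis using gdist_eq_0_iff[OF assms(2) uv(2,1)] by simp
    next
      case 2
      then have "gdist V E u v = 0" using same uv by force
      then show ?thesis using gdist_eq_0_iff[OF assms(2) uv] by simp
    qed
  qed
qed

lemma metric_dim_le_induced_diam_le_2:
  assumes "finite V" "connected_graph V E" "S \<subseteq> V"
    and "gdiam S (induced_edges E S) \<le> 2"
  shows "metric_dim V E \<le> metric_dim S (induced_edges E S) + card (V - S)"
proof -
  let ?H = "induced_edges E S"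
  have "finite S" using assms(1,3) by (rule rev_finite_subset)
  have diam: "gdiam S ?H \<le> enat 2" using assms(4) by (simp add: numeral_eq_enat)
  note conn_H = gdiam_le_enatD(1)[OF \<open>finite S\<close> diam]
  obtain W where W: "resolving_set S ?H W" "card W = metric_dim S ?H"
    using metric_basis_exists[OF \<open>finite S\<close> conn_H] .
  have "resolving_set V E (W \<union> (V - S))"
    using assms(3,2) conn_H gdiam_le_enatD(2)[OF \<open>finite S\<close> diam] W(1)
    by (rule resolving_set_Un_outside_induced)
  then have "metric_dim V E \<le> card (W \<union> (V - S))"
    using assms(1) by (intro metric_dim_le_card)
  also have "\<dots> \<le> card W + card (V - S)" by (rule card_Un_le)
  finally show ?thesis using W(2) by simp
qed

theorem corollary2p6:
  fixes V S :: "'a set" and E :: "'a \<Rightarrow> 'a \<Rightarrow> bool" and t :: nat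
  assumes "simple_graph V E" and "connected_graph V E"
    and "S \<subseteq> V"
    and "gdiam S (induced_edges E S) = 2"
    and "t > 0"
    and "int (metric_dim S (induced_edges E S)) = int (card S) - int t"
  shows "int (metric_dim V E) \<le> int (card V) - int t"
proof -
  have "finite V" using assms(1) by (simp add: simple_graph_def)
  then have "metric_dim V E \<le> metric_dim S (induced_edges E S) + card (V - S)"
    using assms(2-4) by (intro metric_dim_le_induced_diam_le_2) simp_all
  moreover have "card (V - S) = card V - card S" "card S \<le> card V"
    using \<open>finite V\<close> assms(3) by (simp_all add: card_Diff_subset finite_subset card_mono)
  ultimately show ?thesis using assms(6) by linarith
qed

end
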